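(* Let $M$ be a matroid on a finite set $E$ with $r(M)>0$. If $M$ is a unique expansion matroid, then $M$ is a unique exchange matroid.
   Context: For a matroid $M$: $\mathcal{I}(M)$ its independent sets, $\mathcal{B}(M)$ its bases, $r(M)$ the size of a base. $s(M)=\{A\in\mathcal{I}(M): |A|=r(M)-1\}$. $M$ is a unique expansion matroid if for every $B\in\mathcal{B}(M)$ and every $A\in s(M)$, whenever $e_1,e_2\in B$ satisfy $A\cup\{e_1\}\in\mathcal{B}(M)$ and $A\cup\{e_2\}\in\mathcal{B}(M)$, then $e_1=e_2$. $M$ is a unique exchange matroid if for all $B_1,B_2\in\mathcal{B}(M)$, whenever $x\in B_1-B_2$, $y_1,y_2\in B_2-B_1$, $(B_1-\{x\})\cup\{y_1\}\in\mathcal{B}(M)$ and $(B_1-\{x\})\cup\{y_2\}\in\mathcal{B}(M)$, then $y_1=y_2$. *)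

theory Defs
  imports Main
begin

definition matroid :: "'a set \<Rightarrow> 'a set set \<Rightarrow> bool" where
  "matroid E Ind \<longleftrightarrow>
     finite E \<and>
     (\<forall>A\<in>Ind. A \<subseteq> E) \<and>
     {} \<in> Ind \<and>
     (\<forall>A B. A \<in> Ind \<and> B \<subseteq> A \<longrightarrow> B \<in> Ind) \<and>
     (\<forall>A\<in>Ind. \<forall>B\<in>Ind. card A < card B \<longrightarrow> (\<exists>e\<in>B - A. insert e A \<in> Ind))"

definition bases :: "'a set set \<Rightarrow> 'a set set" where
  "bases Ind = {B. B \<in> Ind \<and> (\<forall>A\<in>Ind. B \<subseteq> A \<longrightarrow> A = B)}"

definition mrank :: "'a set set \<Rightarrow> nat" where
  "mrank Ind = (SOME n. \<exists>B\<in>bases Ind. card B = n)"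

definition s_sets :: "'a set set \<Rightarrow> 'a set set" where
  "s_sets Ind = {A \<in> Ind. card A = mrank Ind - 1}"

definition unique_expansion :: "'a set set \<Rightarrow> bool" where
  "unique_expansion Ind \<longleftrightarrow>
     (\<forall>B\<in>bases Ind. \<forall>A\<in>s_sets Ind. \<forall>e1\<in>B. \<forall>e2\<in>B.
        insert e1 A \<in> bases Ind \<and> insert e2 A \<in> bases Ind \<longrightarrow> e1 = e2)"

definition unique_exchange :: "'a set set \<Rightarrow> bool" where
  "unique_exchange Ind \<longleftrightarrow>
     (\<forall>B1\<in>bases Ind. \<forall>B2\<in>bases Ind. \<forall>x\<in>B1 - B2. \<forall>y1\<in>B2 - B1. \<forall>y2\<in>B2 - B1.
        insert y1 (B1 - {x}) \<in> bases Ind \<and> insert y2 (B1 - {x}) \<in> bases Ind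
          \<longrightarrow> y1 = y2)"

end

theory Submission
  imports Defs
begin

text \<open>Deleting x from B1 leaves an independent set of size r(M) - 1, and y1, y2 are two
elements of the base B2 that both expand it to a base; unique expansion forces y1 = y2.\<close>

lemma matroid_bases_card_eq:
  assumes "matroid E Ind" and "B1 \<in> bases Ind" and "B2 \<in> bases Ind"
  shows "card B1 = card B2"
proof -
  have augment: "\<And>A B. A \<in> Ind \<Longrightarrow> B \<in> Ind \<Longrightarrow> card A < card B \<Longrightarrow> \<exists>e\<in>B - A. insert e A \<in> Ind"
    using assms(1) unfolding matroid_def by blast
  have no_augment: "\<And>B e. B \<in> bases Ind \<Longrightarrow> e \<notin> B \<Longrightarrow> insert e B \<notin> Ind"
    unfolding bases_def by blast
  have "\<not> card B1 < card B2" and "\<not> card B2 < card B1"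
    using augment[of B1 B2] augment[of B2 B1] no_augment assms(2,3)
    by (auto simp: bases_def)
  then show ?thesis by simp
qed

lemma matroid_mrank_eq_card_base:
  assumes "matroid E Ind" and "B \<in> bases Ind"
  shows "mrank Ind = card B"
proof -
  obtain B' where "B' \<in> bases Ind" and "card B' = mrank Ind"
    using someI[of "\<lambda>n. \<exists>B'\<in>bases Ind. card B' = n" "card B"] assms(2)
    unfolding mrank_def by blast
  then show ?thesis using matroid_bases_card_eq[OF assms(1,2)] by simp
qed

lemma matroid_base_remove_in_s_sets:
  assumes "matroid E Ind" and "B \<in> bases Ind" and "x \<in> B"
  shows "B - {x} \<in> s_sets Ind"
proof -
  have "B \<in> Ind" using assms(2) unfolding bases_def by blast
  moreover have "finite B"
    using assms(1) \<open>B \<in> Ind\<close> unfolding matroid_def by (meson finite_subset)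
  ultimately have "B - {x} \<in> Ind" and "card (B - {x}) = card B - 1"
    using assms(1,3) unfolding matroid_def by (blast, simp)
  then show ?thesis
    unfolding s_sets_def using matroid_mrank_eq_card_base[OF assms(1,2)] by simp
qed

theorem proposition18:
  fixes E :: "'a set" and Ind :: "'a set set"
  assumes "matroid E Ind"
    and "mrank Ind > 0"
    and "unique_expansion Ind"
  shows "unique_exchange Ind"
  unfolding unique_exchange_def
proof (intro ballI impI)
  fix B1 B2 x y1 y2
  assume "B1 \<in> bases Ind" and "B2 \<in> bases Ind" and "x \<in> B1 - B2"
    and "y1 \<in> B2 - B1" and "y2 \<in> B2 - B1"
    and "insert y1 (B1 - {x}) \<in> bases Ind \<and> insert y2 (B1 - {x}) \<in> bases Ind"
  moreover have "B1 - {x} \<in> s_sets Ind"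
    using matroid_base_remove_in_s_sets[OF assms(1) \<open>B1 \<in> bases Ind\<close>] \<open>x \<in> B1 - B2\<close> by blast
  ultimately show "y1 = y2"
    using assms(3) unfolding unique_expansion_def by blast
qed

end
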